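(* Consider the distributed detection model in the context with $\alpha\le 0.5$. For $(P_{1,0},P_{0,1})\in[0,1]^2$ with $\alpha(P_{1,0}+P_{0,1})<1$, let $$T(P_{1,0},P_{0,1})=\frac{\ln\left[\frac{P_0}{P_1}\left(\frac{1-\pi_{1,0}}{1-\pi_{1,1}}\right)^{N}\right]}{\ln\left[\frac{\pi_{1,1}(1-\pi_{1,0})}{\pi_{1,0}(1-\pi_{1,1})}\right]},$$ and let $\Phi(P_{1,0},P_{0,1})$ denote the error probability $P_E$ of the $K$-out-of-$N$ fusion rule with $K=\lceil T(P_{1,0},P_{0,1})\rceil$. Then $\Phi$ is a monotonically increasing function of $P_{1,0}$ when $P_{0,1}$ is held fixed, and a monotonically increasing function of $P_{0,1}$ when $P_{1,0}$ is held fixed.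
   Context: Binary hypothesis test between $H_0$ and $H_1$ with priors $P_0,P_1\in(0,1)$, $P_0+P_1=1$. There are $N$ sensors, each using the same fixed local threshold, so that conditionally on the hypothesis their local decisions $v_i\in\{0,1\}$ are i.i.d. with $P(v_i=1\mid H_1)=P_d$, $P(v_i=1\mid H_0)=P_f$, where $0<P_f<P_d<1$. Each sensor independently is Byzantine with probability $\alpha\in[0,1]$. Honest nodes send $u_i=v_i$; a Byzantine node sends $u_i=1$ with probability $P_{1,0}$ when $v_i=0$ and sends $u_i=0$ with probability $P_{0,1}$ when $v_i=1$. Hence conditionally on $H_j$ the $u_i$ are i.i.d. with $P(u_i=1\mid H_0)=\pi_{1,0}=\alpha(P_{1,0}(1-P_f)+(1-P_{0,1})P_f)+(1-\alpha)P_f$ and $P(u_i=1\mid H_1)=\pi_{1,1}=\alpha(P_{1,0}(1-P_d)+(1-P_{0,1})P_d)+(1-\alpha)P_d$. A $K$-out-of-$N$ fusion rule decides $H_1$ iff at least $K$ of the $u_i$ equal $1$; its error probability is $P_E=P_0Q_F+P_1(1-Q_D)$ with $Q_F=\sum_{i=K}^N\binom{N}{i}\pi_{1,0}^i(1-\pi_{1,0})^{N-i}$ and $Q_D=\sum_{i=K}^N\binom{N}{i}\pi_{1,1}^i(1-\pi_{1,1})^{N-i}$. The rule with $K=\lceil T\rceil$ is the optimal (MAP) fusion rule when $\alpha(P_{1,0}+P_{0,1})<1$. *)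

theory Defs
  imports Complex_Main
begin

text \<open>Probability that a transmitted decision equals 1 under H0 (pi_{1,0}) and under H1 (pi_{1,1}).\<close>
definition pi10 :: "real \<Rightarrow> real \<Rightarrow> real \<Rightarrow> real \<Rightarrow> real" where
  "pi10 \<alpha> Pf P10 P01 = \<alpha> * (P10 * (1 - Pf) + (1 - P01) * Pf) + (1 - \<alpha>) * Pf"

definition pi11 :: "real \<Rightarrow> real \<Rightarrow> real \<Rightarrow> real \<Rightarrow> real" where
  "pi11 \<alpha> Pd P10 P01 = \<alpha> * (P10 * (1 - Pd) + (1 - P01) * Pd) + (1 - \<alpha>) * Pd"

definition thrT :: "nat \<Rightarrow> real \<Rightarrow> real \<Rightarrow> real \<Rightarrow> real \<Rightarrow> real \<Rightarrow> real \<Rightarrow> real" where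
  "thrT N P0 \<alpha> Pd Pf P10 P01 =
     (let a = pi10 \<alpha> Pf P10 P01; b = pi11 \<alpha> Pd P10 P01 in
      ln ((P0 / (1 - P0)) * ((1 - a) / (1 - b)) ^ N) / ln ((b * (1 - a)) / (a * (1 - b))))"

definition tail_prob :: "nat \<Rightarrow> int \<Rightarrow> real \<Rightarrow> real" where
  "tail_prob N K p = (\<Sum>i\<in>{i. K \<le> int i \<and> i \<le> N}. real (N choose i) * p ^ i * (1 - p) ^ (N - i))"

definition PE :: "nat \<Rightarrow> int \<Rightarrow> real \<Rightarrow> real \<Rightarrow> real \<Rightarrow> real \<Rightarrow> real \<Rightarrow> real \<Rightarrow> real" where
  "PE N K P0 \<alpha> Pd Pf P10 P01 =
     P0 * tail_prob N K (pi10 \<alpha> Pf P10 P01) + (1 - P0) * (1 - tail_prob N K (pi11 \<alpha> Pd P10 P01))"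

definition Phi :: "nat \<Rightarrow> real \<Rightarrow> real \<Rightarrow> real \<Rightarrow> real \<Rightarrow> real \<Rightarrow> real \<Rightarrow> real" where
  "Phi N P0 \<alpha> Pd Pf P10 P01 =
     PE N \<lceil>thrT N P0 \<alpha> Pd Pf P10 P01\<rceil> P0 \<alpha> Pd Pf P10 P01"

end

theory Submission imports Defs "HOL-Computational_Algebra.Polynomial" begin

text \<open>The threshold rule K = \<lceil>T\<rceil> is the MAP rule, so \<Phi> equals the Bayes risk
  sum over k of min (P0 B(k; pi10), P1 B(k; pi11)) of the binomial count, and any fixed
  K-out-of-N rule does no better. Writing c = \<alpha> P10 and d = \<alpha> P01, both transmission
  probabilities have the form c + x (1 - c - d); increasing c or d amounts to sending every
  reported bit through a further binary channel, independently across sensors. This garbles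
  the count by a stochastic kernel, and a stochastic kernel cannot decrease a sum of minima.
  Hence the Bayes risk, and with it \<Phi>, can only grow.\<close>

definition binomial_prob :: "nat \<Rightarrow> real \<Rightarrow> nat \<Rightarrow> real" where
  "binomial_prob N p k = real (N choose k) * p ^ k * (1 - p) ^ (N - k)"

definition bayes_risk :: "nat \<Rightarrow> real \<Rightarrow> real \<Rightarrow> real \<Rightarrow> real" where
  "bayes_risk N P0 a b = (\<Sum>k\<le>N. min (P0 * binomial_prob N a k) ((1 - P0) * binomial_prob N b k))"

lemma sum_binomial_prob: "(\<Sum>k\<le>N. binomial_prob N p k) = 1"
  using binomial_ring[of p "1 - p" N] by (simp add: binomial_prob_def)

lemma tail_prob_eq_sum: "tail_prob N K p = (\<Sum>k\<le>N. if K \<le> int k then binomial_prob N p k else 0)"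
proof -
  have "{i. K \<le> int i \<and> i \<le> N} = {k\<in>{..N}. K \<le> int k}" by auto
  then show ?thesis unfolding tail_prob_def binomial_prob_def
    by (simp add: sum.inter_filter[symmetric])
qed

lemma PE_eq_sum:
  "PE N K P0 \<alpha> Pd Pf P10 P01 =
    (\<Sum>k\<le>N. if K \<le> int k then P0 * binomial_prob N (pi10 \<alpha> Pf P10 P01) k
             else (1 - P0) * binomial_prob N (pi11 \<alpha> Pd P10 P01) k)"
proof -
  let ?b = "pi11 \<alpha> Pd P10 P01"
  have "1 - tail_prob N K ?b = (\<Sum>k\<le>N. binomial_prob N ?b k) - tail_prob N K ?b"
    by (simp add: sum_binomial_prob)
  also have "\<dots> = (\<Sum>k\<le>N. if K \<le> int k then 0 else binomial_prob N ?b k)"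
    unfolding tail_prob_eq_sum sum_subtractf[symmetric] by (rule sum.cong) auto
  finally have "1 - tail_prob N K ?b = \<dots>" .
  then show ?thesis unfolding PE_def tail_prob_eq_sum
    by (auto simp add: sum_distrib_left sum.distrib[symmetric] intro!: sum.cong)
qed

lemma bayes_risk_le_PE:
  "bayes_risk N P0 (pi10 \<alpha> Pf P10 P01) (pi11 \<alpha> Pd P10 P01) \<le> PE N K P0 \<alpha> Pd Pf P10 P01"
  unfolding PE_eq_sum bayes_risk_def by (rule sum_mono) auto

lemma MAP_threshold_le_iff:
  fixes P0 a b :: real
  assumes "0 < P0" "P0 < 1" "0 < a" "a < b" "b < 1" "k \<le> N"
  shows "ln ((P0 / (1 - P0)) * ((1 - a) / (1 - b)) ^ N) / ln ((b * (1 - a)) / (a * (1 - b))) \<le> k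
     \<longleftrightarrow> P0 * binomial_prob N a k \<le> (1 - P0) * binomial_prob N b k"
proof -
  define r where "r = (b * (1 - a)) / (a * (1 - b))"
  define Q where "Q = (P0 / (1 - P0)) * ((1 - a) / (1 - b)) ^ N"
  have "b * (1 - a) > a * (1 - b)" using assms by (simp add: algebra_simps)
  then have "r > 1" unfolding r_def using assms by simp
  have "Q > 0" unfolding Q_def using assms by simp
  have split: "(1 - x) ^ N = (1 - x) ^ k * (1 - x) ^ (N - k)" for x :: real
    using assms(6) by (simp flip: power_add)
  have "ln Q / ln r \<le> k \<longleftrightarrow> ln Q \<le> ln (r ^ k)"
    using \<open>r > 1\<close> by (simp add: pos_divide_le_eq ln_realpow mult.commute)
  also have "\<dots> \<longleftrightarrow> Q \<le> r ^ k"
    using \<open>Q > 0\<close> \<open>r > 1\<close> by simp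
  also have "\<dots> \<longleftrightarrow> (P0 * (1 - a) ^ N) / ((1 - P0) * (1 - b) ^ N)
                    \<le> ((1 - a) ^ k * b ^ k) / (a ^ k * (1 - b) ^ k)"
    unfolding Q_def r_def by (simp add: power_divide power_mult_distrib ac_simps)
  also have "\<dots> \<longleftrightarrow> P0 * (1 - a) ^ N * (a ^ k * (1 - b) ^ k)
                    \<le> (1 - P0) * (1 - b) ^ N * (b ^ k * (1 - a) ^ k)"
    using assms by (simp add: divide_le_eq le_divide_eq ac_simps)
  also have "\<dots> \<longleftrightarrow> ((1 - a) ^ k * (1 - b) ^ k) * (P0 * a ^ k * (1 - a) ^ (N - k))
                    \<le> ((1 - a) ^ k * (1 - b) ^ k) * ((1 - P0) * b ^ k * (1 - b) ^ (N - k))"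
    unfolding split[of a] split[of b] by (simp add: ac_simps)
  also have "\<dots> \<longleftrightarrow> P0 * a ^ k * (1 - a) ^ (N - k) \<le> (1 - P0) * b ^ k * (1 - b) ^ (N - k)"
    using assms by (intro mult_le_cancel_left_pos) simp
  also have "\<dots> \<longleftrightarrow> P0 * binomial_prob N a k \<le> (1 - P0) * binomial_prob N b k"
    using assms(6) unfolding binomial_prob_def
    by (simp add: mult.left_commute[of _ "real (N choose k)"] mult.assoc)
  finally show ?thesis unfolding Q_def r_def .
qed

lemma PE_MAP_eq_bayes_risk:
  assumes "0 < P0" "P0 < 1" "0 < pi10 \<alpha> Pf P10 P01" "pi10 \<alpha> Pf P10 P01 < pi11 \<alpha> Pd P10 P01"
    "pi11 \<alpha> Pd P10 P01 < 1"
  shows "Phi N P0 \<alpha> Pd Pf P10 P01 = bayes_risk N P0 (pi10 \<alpha> Pf P10 P01) (pi11 \<alpha> Pd P10 P01)"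
  unfolding Phi_def PE_eq_sum bayes_risk_def
proof (intro sum.cong refl)
  fix k assume "k \<in> {..N}"
  with assms MAP_threshold_le_iff[of P0 "pi10 \<alpha> Pf P10 P01" "pi11 \<alpha> Pd P10 P01" k N]
  show "(if \<lceil>thrT N P0 \<alpha> Pd Pf P10 P01\<rceil> \<le> int k then P0 * binomial_prob N (pi10 \<alpha> Pf P10 P01) k
         else (1 - P0) * binomial_prob N (pi11 \<alpha> Pd P10 P01) k)
      = min (P0 * binomial_prob N (pi10 \<alpha> Pf P10 P01) k) ((1 - P0) * binomial_prob N (pi11 \<alpha> Pd P10 P01) k)"
    unfolding thrT_def Let_def ceiling_le_iff by auto
qed

lemma sum_min_le_sum_min_kernel:
  fixes W :: "'a \<Rightarrow> 'b \<Rightarrow> real"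
  assumes "finite A" "finite B"
    and "\<And>k j. k \<in> A \<Longrightarrow> j \<in> B \<Longrightarrow> 0 \<le> W k j"
    and "\<And>k. k \<in> A \<Longrightarrow> (\<Sum>j\<in>B. W k j) = 1"
  shows "(\<Sum>k\<in>A. min (x k) (y k)) \<le> (\<Sum>j\<in>B. min (\<Sum>k\<in>A. W k j * x k) (\<Sum>k\<in>A. W k j * y k))"
proof -
  have "(\<Sum>k\<in>A. min (x k) (y k)) = (\<Sum>k\<in>A. (\<Sum>j\<in>B. W k j) * min (x k) (y k))"
    using assms(4) by simp
  also have "\<dots> = (\<Sum>j\<in>B. \<Sum>k\<in>A. W k j * min (x k) (y k))"
    unfolding sum_distrib_right by (rule sum.swap)
  also have "\<dots> \<le> (\<Sum>j\<in>B. min (\<Sum>k\<in>A. W k j * x k) (\<Sum>k\<in>A. W k j * y k))"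
    using assms(3) by (intro sum_mono min.boundedI; intro sum_mono mult_left_mono) auto
  finally show ?thesis .
qed

lemma coeff_mult_nonneg:
  fixes p q :: "'a::linordered_semidom poly"
  assumes "\<And>i. 0 \<le> coeff p i" "\<And>i. 0 \<le> coeff q i"
  shows "0 \<le> coeff (p * q) i"
  unfolding coeff_mult using assms by (intro sum_nonneg mult_nonneg_nonneg)

lemma coeff_power_nonneg:
  fixes p :: "'a::linordered_semidom poly"
  assumes "\<And>i. 0 \<le> coeff p i"
  shows "0 \<le> coeff (p ^ n) i"
proof (induction n arbitrary: i)
  case 0
  then show ?case by (simp add: coeff_1)
next
  case (Suc n)
  then show ?case using assms by (simp add: coeff_mult_nonneg)
qed

text \<open>Each of N bits passes independently through the binary channel that outputs 1 with
  probability t + m on input 1 and t on input 0. Given k input ones, the number of output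
  ones is distributed as the coefficients of the generating function below.\<close>

definition channel_kernel :: "nat \<Rightarrow> real \<Rightarrow> real \<Rightarrow> nat \<Rightarrow> nat \<Rightarrow> real" where
  "channel_kernel N t m k j = coeff ([:1 - (t + m), t + m:] ^ k * [:1 - t, t:] ^ (N - k)) j"

lemma channel_kernel_nonneg:
  assumes "0 \<le> t" "0 \<le> m" "t + m \<le> 1"
  shows "0 \<le> channel_kernel N t m k j"
proof -
  have "0 \<le> coeff [:1 - (t + m), t + m:] i" "0 \<le> coeff [:1 - t, t:] i" for i
    using assms by (auto simp: coeff_pCons split: nat.split)
  then show ?thesis
    unfolding channel_kernel_def by (intro coeff_mult_nonneg coeff_power_nonneg)
qed

lemma channel_kernel_sum:
  assumes "k \<le> N"
  shows "(\<Sum>j\<le>N. channel_kernel N t m k j) = 1"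
proof -
  define p where "p = [:1 - (t + m), t + m:] ^ k * [:1 - t, t:] ^ (N - k)"
  have "degree p \<le> degree [:1 - (t + m), t + m:] * k + degree [:1 - t, t:] * (N - k)"
    unfolding p_def by (meson add_mono degree_mult_le degree_power_le order_trans)
  also have "\<dots> \<le> 1 * k + 1 * (N - k)"
    by (intro add_mono mult_right_mono) (auto simp: degree_pCons_le)
  finally have "degree p \<le> N" using assms by simp
  have "(\<Sum>j\<le>N. coeff p j) = (\<Sum>j\<le>degree p. coeff p j)"
    using \<open>degree p \<le> N\<close> by (intro sum.mono_neutral_right) (auto simp: coeff_eq_0)
  also have "\<dots> = poly p 1" by (simp add: poly_altdef)
  also have "\<dots> = 1" unfolding p_def by simp
  finally show ?thesis unfolding channel_kernel_def p_def .
qed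

lemma binomial_prob_through_channel:
  assumes "j \<le> N"
  shows "(\<Sum>k\<le>N. channel_kernel N t m k j * binomial_prob N c k) = binomial_prob N (t + m * c) j"
proof -
  define q1 :: "real poly" where "q1 = [:1 - (t + m), t + m:]"
  define q0 :: "real poly" where "q0 = [:1 - t, t:]"
  have "(\<Sum>k\<le>N. smult (binomial_prob N c k) (q1 ^ k * q0 ^ (N - k)))
      = (\<Sum>k\<le>N. of_nat (N choose k) * (smult c q1) ^ k * (smult (1 - c) q0) ^ (N - k))"
    unfolding binomial_prob_def smult_power of_nat_mult_conv_smult
    by (intro sum.cong refl) (simp add: mult_smult_left mult_smult_right ac_simps)
  also have "\<dots> = (smult c q1 + smult (1 - c) q0) ^ N"
    by (rule binomial_ring[symmetric])
  also have "smult c q1 + smult (1 - c) q0 = [:1 - (t + m * c), t + m * c:]"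
    unfolding q1_def q0_def by (simp add: algebra_simps)
  finally have "(\<Sum>k\<le>N. smult (binomial_prob N c k) (q1 ^ k * q0 ^ (N - k)))
      = [:1 - (t + m * c), t + m * c:] ^ N" .
  then have "coeff (\<Sum>k\<le>N. smult (binomial_prob N c k) (q1 ^ k * q0 ^ (N - k))) j
      = coeff ([:1 - (t + m * c), t + m * c:] ^ N) j"
    by simp
  then show ?thesis
    unfolding coeff_sum coeff_smult coeff_linear_poly_power[OF assms] channel_kernel_def
      q1_def q0_def binomial_prob_def
    by (simp add: ac_simps)
qed

lemma bayes_risk_through_channel:
  assumes "0 \<le> t" "0 \<le> m" "t + m \<le> 1"
  shows "bayes_risk N P0 a b \<le> bayes_risk N P0 (t + m * a) (t + m * b)"
proof -
  have "bayes_risk N P0 a b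
      \<le> (\<Sum>j\<le>N. min (\<Sum>k\<le>N. channel_kernel N t m k j * (P0 * binomial_prob N a k))
                     (\<Sum>k\<le>N. channel_kernel N t m k j * ((1 - P0) * binomial_prob N b k)))"
    unfolding bayes_risk_def using assms
    by (intro sum_min_le_sum_min_kernel channel_kernel_nonneg channel_kernel_sum) auto
  also have "\<dots> = bayes_risk N P0 (t + m * a) (t + m * b)"
    unfolding bayes_risk_def
    by (intro sum.cong refl)
       (simp add: binomial_prob_through_channel flip: sum_distrib_left mult.left_commute)
  finally show ?thesis .
qed

lemma pi10_eq: "pi10 \<alpha> Pf P10 P01 = \<alpha> * P10 + Pf * (1 - \<alpha> * P10 - \<alpha> * P01)"
  unfolding pi10_def by (simp add: algebra_simps)

lemma pi11_eq: "pi11 \<alpha> Pd P10 P01 = \<alpha> * P10 + Pd * (1 - \<alpha> * P10 - \<alpha> * P01)"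
  unfolding pi11_def by (simp add: algebra_simps)

lemma pi10_pi11_bounds:
  assumes "0 < Pf" "Pf < Pd" "Pd < 1" "0 \<le> \<alpha>" "0 \<le> P10" "0 \<le> P01" "\<alpha> * (P10 + P01) < 1"
  shows "0 < pi10 \<alpha> Pf P10 P01" "pi10 \<alpha> Pf P10 P01 < pi11 \<alpha> Pd P10 P01" "pi11 \<alpha> Pd P10 P01 < 1"
proof -
  define c where "c = \<alpha> * P10"
  define d where "d = \<alpha> * P01"
  have "0 \<le> c" "0 \<le> d" "0 < 1 - c - d"
    unfolding c_def d_def using assms by (simp_all add: distrib_left)
  have "Pf * (1 - c - d) < Pd * (1 - c - d)" "Pd * (1 - c - d) < 1 - c - d"
    using \<open>0 < 1 - c - d\<close> assms(2,3) by simp_all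
  moreover have "0 < Pf * (1 - c - d)" using \<open>0 < 1 - c - d\<close> assms(1) by simp
  ultimately show "0 < pi10 \<alpha> Pf P10 P01" "pi10 \<alpha> Pf P10 P01 < pi11 \<alpha> Pd P10 P01"
      "pi11 \<alpha> Pd P10 P01 < 1"
    unfolding pi10_eq pi11_eq c_def[symmetric] d_def[symmetric] using \<open>0 \<le> c\<close> \<open>0 \<le> d\<close>
    by linarith+
qed

lemma affine_attack_as_channel:
  fixes c d c' d' :: real
  assumes "0 \<le> c" "c \<le> c'" "0 \<le> d" "d \<le> d'" "c' + d' < 1"
  obtains t m where "0 \<le> t" "0 \<le> m" "t + m \<le> 1"
    "\<And>x. c' + x * (1 - c' - d') = t + m * (c + x * (1 - c - d))"
proof -
  define D where "D = 1 - c - d"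
  have "0 < D" unfolding D_def using assms by simp
  define m where "m = (1 - c' - d') / D"
  define t where "t = c' - c * m"
  have mD: "m * D = 1 - c' - d'" unfolding m_def using \<open>0 < D\<close> by simp
  have "0 \<le> m" unfolding m_def using assms \<open>0 < D\<close> by simp
  have "t * D = (c' - c) * (1 - d) + c * (d' - d)"
    unfolding t_def left_diff_distrib mult.assoc mD unfolding D_def by (simp add: algebra_simps)
  also have "\<dots> \<ge> 0" using assms by simp
  finally have "0 \<le> t" using \<open>0 < D\<close> by (simp add: zero_le_mult_iff)
  have "(1 - t - m) * D = (d' - d) * (1 - c) + (c' - c) * d"
    unfolding t_def left_diff_distrib mult.assoc mD unfolding D_def by (simp add: algebra_simps)
  also have "\<dots> \<ge> 0" using assms by simp
  finally have "t + m \<le> 1" using \<open>0 < D\<close> by (simp add: zero_le_mult_iff)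
  have "t + m * (c + x * D) = c' + x * (m * D)" for x
    unfolding t_def by (simp add: algebra_simps)
  then have "c' + x * (1 - c' - d') = t + m * (c + x * (1 - c - d))" for x
    unfolding mD[symmetric] D_def[symmetric] by simp
  with \<open>0 \<le> t\<close> \<open>0 \<le> m\<close> \<open>t + m \<le> 1\<close> show ?thesis by (rule that)
qed

lemma Phi_mono:
  assumes "0 < P0" "P0 < 1" "0 < Pf" "Pf < Pd" "Pd < 1" "0 \<le> \<alpha>"
    and "0 \<le> P10" "P10 \<le> P10'" "0 \<le> P01" "P01 \<le> P01'" "\<alpha> * (P10' + P01') < 1"
  shows "Phi N P0 \<alpha> Pd Pf P10 P01 \<le> Phi N P0 \<alpha> Pd Pf P10' P01'"
proof -
  have "\<alpha> * P10 \<le> \<alpha> * P10'" "\<alpha> * P01 \<le> \<alpha> * P01'" "\<alpha> * P10' + \<alpha> * P01' < 1"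
    using assms by (simp_all add: mult_left_mono distrib_left)
  then obtain t m where tm: "0 \<le> t" "0 \<le> m" "t + m \<le> 1"
    and channel: "\<And>x. \<alpha> * P10' + x * (1 - \<alpha> * P10' - \<alpha> * P01')
                       = t + m * (\<alpha> * P10 + x * (1 - \<alpha> * P10 - \<alpha> * P01))"
    using affine_attack_as_channel[of "\<alpha> * P10" "\<alpha> * P10'" "\<alpha> * P01" "\<alpha> * P01'"] assms
    by auto
  have "\<alpha> * (P10 + P01) < 1"
    using assms \<open>\<alpha> * P10 \<le> \<alpha> * P10'\<close> \<open>\<alpha> * P01 \<le> \<alpha> * P01'\<close> by (simp add: distrib_left)
  then have "Phi N P0 \<alpha> Pd Pf P10 P01
      = bayes_risk N P0 (pi10 \<alpha> Pf P10 P01) (pi11 \<alpha> Pd P10 P01)"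
    using assms pi10_pi11_bounds[of Pf Pd \<alpha> P10 P01] by (intro PE_MAP_eq_bayes_risk) auto
  also have "\<dots> \<le> bayes_risk N P0 (t + m * pi10 \<alpha> Pf P10 P01) (t + m * pi11 \<alpha> Pd P10 P01)"
    using tm by (rule bayes_risk_through_channel)
  also have "\<dots> = bayes_risk N P0 (pi10 \<alpha> Pf P10' P01') (pi11 \<alpha> Pd P10' P01')"
    unfolding pi10_eq pi11_eq channel ..
  also have "\<dots> \<le> Phi N P0 \<alpha> Pd Pf P10' P01'"
    unfolding Phi_def by (rule bayes_risk_le_PE)
  finally show ?thesis .
qed

theorem lemma6:
  fixes N :: nat and P0 \<alpha> Pd Pf :: real
  assumes "0 < P0" "P0 < 1"
    and "0 < Pf" "Pf < Pd" "Pd < 1"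
    and "0 \<le> \<alpha>" "\<alpha> \<le> 1/2"
  shows "(\<forall>P10 P10' P01. 0 \<le> P10 \<and> P10 \<le> P10' \<and> P10' \<le> 1 \<and> 0 \<le> P01 \<and> P01 \<le> 1
             \<and> \<alpha> * (P10' + P01) < 1
             \<longrightarrow> Phi N P0 \<alpha> Pd Pf P10 P01 \<le> Phi N P0 \<alpha> Pd Pf P10' P01)
       \<and> (\<forall>P10 P01 P01'. 0 \<le> P10 \<and> P10 \<le> 1 \<and> 0 \<le> P01 \<and> P01 \<le> P01' \<and> P01' \<le> 1
             \<and> \<alpha> * (P10 + P01') < 1
             \<longrightarrow> Phi N P0 \<alpha> Pd Pf P10 P01 \<le> Phi N P0 \<alpha> Pd Pf P10 P01')"
  using Phi_mono[OF assms(1-6)] by auto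

end
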